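(* For every positive integer $n$, $\mathsf{pf}_n(132)=\mathsf{pf}_n(231)$ and $\mathsf{pf}_n(213)=\mathsf{pf}_n(312)$.
   Context: $[n]=\{1,\dots,n\}$. A tuple $p=(p_1,\dots,p_n)\in[n]^n$ is a parking function if its weakly increasing rearrangement $(p'_1,\dots,p'_n)$ satisfies $p'_i\le i$ for all $i$. To a parking function $p$ associate the permutation $\pi(p)$ obtained by listing, for $s=1,\dots,n$ in turn, the indices $j$ with $p_j=s$ in increasing order, and concatenating. A permutation $\pi$ avoids $\sigma\in\mathfrak S_3$ if no length-3 subsequence of $\pi$ is order-isomorphic to $\sigma$. $\mathsf{pf}_n(\sigma)$ is the number of parking functions $p$ of length $n$ with $\pi(p)$ avoiding $\sigma$. *)

theory Defs
  imports Main
begin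

(* A tuple p = (p_1,...,p_n) in [n]^n is represented as a list p of length n,
   with p_j = p ! (j - 1). *)

definition is_parking_function :: "nat \<Rightarrow> nat list \<Rightarrow> bool" where
  "is_parking_function n p \<longleftrightarrow>
     length p = n \<and> set p \<subseteq> {1..n} \<and>
     (\<forall>i\<in>{1..n}. sort p ! (i - 1) \<le> i)"

definition pf_perm :: "nat list \<Rightarrow> nat list" where
  "pf_perm p = concat (map (\<lambda>s. filter (\<lambda>j. p ! (j - 1) = s) [1..<length p + 1])
                            [1..<length p + 1])"

definition contains3 :: "nat list \<Rightarrow> nat list \<Rightarrow> bool" where
  "contains3 w \<sigma> \<longleftrightarrow>
     (\<exists>i j k. i < j \<and> j < k \<and> k < length w \<and>
        (let t = [w ! i, w ! j, w ! k] in
          \<forall>a<3. \<forall>b<3. (t ! a < t ! b \<longleftrightarrow> \<sigma> ! a < \<sigma> ! b)))"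

definition avoids :: "nat list \<Rightarrow> nat list \<Rightarrow> bool" where
  "avoids w \<sigma> \<longleftrightarrow> \<not> contains3 w \<sigma>"

definition pf_count :: "nat \<Rightarrow> nat list \<Rightarrow> nat" where
  "pf_count n \<sigma> = card {p. is_parking_function n p \<and> avoids (pf_perm p) \<sigma>}"

end

theory Submission
  imports Defs "HOL-Library.Multiset" "HOL-Library.Product_Lexorder"
begin

text \<open>
  A parking function \<open>p\<close> is determined by \<open>\<pi>(p)\<close> together with the values of \<open>p\<close> read
  along \<open>\<pi>(p)\<close>: a weakly increasing sequence that increases strictly at every descent of
  \<open>\<pi>(p)\<close>, and whose multiset alone decides the parking condition. Hence the number of parking
  functions with a given permutation depends only on its ascent sequence, and
  \<open>pf\<^sub>n(\<sigma>) = pf\<^sub>n(\<tau>)\<close> whenever some bijection between \<open>\<sigma>\<close>-avoiding and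
  \<open>\<tau>\<close>-avoiding permutations preserves ascents.

  Splitting at the maximal entry, a 132-avoider is \<open>\<alpha> n \<beta>\<close> with \<open>\<alpha>\<close> entirely above \<open>\<beta>\<close>,
  and a 231-avoider is \<open>\<alpha> n \<beta>\<close> with \<open>\<alpha>\<close> entirely below \<open>\<beta>\<close>. Recursively
  swapping the value ranges of the two blocks maps 132-avoiders injectively to 231-avoiders
  without changing ascents; reversal shows both sets have the same size. Complementation
  exchanges 213 with 231 and 132 with 312 while negating ascents, which gives the second identity.
\<close>

section \<open>Occurrences of patterns of length three\<close>

lemma all_less_3: "(\<forall>a<(3::nat). P a) \<longleftrightarrow> P 0 \<and> P 1 \<and> P 2"
  by (auto simp: numeral_3_eq_3 numeral_2_eq_2 less_Suc_eq)

lemma contains3_cong: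
  assumes "length v = length w" and "\<forall>i<length w. \<forall>j<length w. v ! i < v ! j \<longleftrightarrow> w ! i < w ! j"
  shows "contains3 v \<sigma> \<longleftrightarrow> contains3 w \<sigma>"
  unfolding contains3_def Let_def assms(1)
proof (intro iff_exI conj_cong refl)
  fix i j k assume "i < j" "j < k" "k < length w"
  then show "(\<forall>a<3. \<forall>b<3. ([v ! i, v ! j, v ! k] ! a < [v ! i, v ! j, v ! k] ! b) = (\<sigma> ! a < \<sigma> ! b))
    \<longleftrightarrow> (\<forall>a<3. \<forall>b<3. ([w ! i, w ! j, w ! k] ! a < [w ! i, w ! j, w ! k] ! b) = (\<sigma> ! a < \<sigma> ! b))"
    using assms(2) by (simp add: all_less_3)
qed

lemma contains3_cong_antitone:
  assumes "length v = length w" and "\<forall>i<length w. \<forall>j<length w. v ! i < v ! j \<longleftrightarrow> w ! j < w ! i"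
    and "\<forall>a<3. \<forall>b<3. \<tau> ! a < \<tau> ! b \<longleftrightarrow> \<sigma> ! b < \<sigma> ! a"
  shows "contains3 v \<sigma> \<longleftrightarrow> contains3 w \<tau>"
  unfolding contains3_def Let_def assms(1)
proof (intro iff_exI conj_cong refl)
  fix i j k assume "i < j" "j < k" "k < length w"
  then show "(\<forall>a<3. \<forall>b<3. ([v ! i, v ! j, v ! k] ! a < [v ! i, v ! j, v ! k] ! b) = (\<sigma> ! a < \<sigma> ! b))
    \<longleftrightarrow> (\<forall>a<3. \<forall>b<3. ([w ! i, w ! j, w ! k] ! a < [w ! i, w ! j, w ! k] ! b) = (\<tau> ! a < \<tau> ! b))"
    using assms(2,3) unfolding all_less_3 by auto
qed

lemma contains3_map_mono:
  assumes "\<forall>x\<in>set w. \<forall>y\<in>set w. h x < h y \<longleftrightarrow> x < y"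
  shows "contains3 (map h w) \<sigma> \<longleftrightarrow> contains3 w \<sigma>"
  using assms by (intro contains3_cong) auto

lemma contains3_Cons3_iff:
  "contains3 w [x, y, z] \<longleftrightarrow> (\<exists>i j k. i < j \<and> j < k \<and> k < length w \<and>
     (w!i < w!j \<longleftrightarrow> x < y) \<and> (w!j < w!i \<longleftrightarrow> y < x) \<and> (w!i < w!k \<longleftrightarrow> x < z) \<and>
     (w!k < w!i \<longleftrightarrow> z < x) \<and> (w!j < w!k \<longleftrightarrow> y < z) \<and> (w!k < w!j \<longleftrightarrow> z < y))"
  unfolding contains3_def Let_def all_less_3 by (simp add: conj_ac)

lemma contains3_rev:
  assumes "length \<sigma> = 3"
  shows "contains3 (rev w) \<sigma> \<longleftrightarrow> contains3 w (rev \<sigma>)"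
proof -
  obtain x y z where \<sigma>: "\<sigma> = [x, y, z]"
    using assms by (metis length_0_conv length_Suc_conv numeral_3_eq_3)
  have rev_imp: "contains3 (rev v) [x, y, z]" if "contains3 v [z, y, x]" for v and x y z :: nat
  proof -
    from that obtain i j k where ijk: "i < j" "j < k" "k < length v"
      and iso: "(v!i < v!j \<longleftrightarrow> z < y) \<and> (v!j < v!i \<longleftrightarrow> y < z) \<and> (v!i < v!k \<longleftrightarrow> z < x) \<and>
       (v!k < v!i \<longleftrightarrow> x < z) \<and> (v!j < v!k \<longleftrightarrow> y < x) \<and> (v!k < v!j \<longleftrightarrow> x < y)"
      unfolding contains3_Cons3_iff by blast
    let ?r = "\<lambda>i. length v - Suc i"
    have "rev v ! ?r k = v ! k" "rev v ! ?r j = v ! j" "rev v ! ?r i = v ! i"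
      using ijk by (simp_all add: rev_nth)
    moreover have "?r k < ?r j" "?r j < ?r i" "?r i < length (rev v)" using ijk by auto
    ultimately show ?thesis
      using iso unfolding contains3_Cons3_iff by (intro exI[of _ "?r k"] exI[of _ "?r j"] exI[of _ "?r i"]) simp
  qed
  show ?thesis unfolding \<sigma> using rev_imp[of w] rev_imp[of "rev w"] by auto
qed

lemma contains3_appendI1: "contains3 xs \<sigma> \<Longrightarrow> contains3 (xs @ ys) \<sigma>"
  unfolding contains3_def Let_def by (elim exE, rename_tac i j k, intro exI) (auto simp: nth_append)

lemma contains3_appendI2: "contains3 ys \<sigma> \<Longrightarrow> contains3 (xs @ ys) \<sigma>"
  unfolding contains3_def Let_def
  by (elim exE, rename_tac i j k, intro exI[of _ "length xs + i" for i]) (auto simp: nth_append)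

lemma contains3_132_iff:
  "contains3 w [1,3,2] \<longleftrightarrow> (\<exists>i j k. i < j \<and> j < k \<and> k < length w \<and> w!i < w!k \<and> w!k < w!j)"
  unfolding contains3_Cons3_iff by (intro iff_exI) auto

lemma contains3_132_append_max:
  assumes xs: "\<forall>x\<in>set xs. x < m" and ys: "\<forall>y\<in>set ys. y < m"
  shows "contains3 (xs @ m # ys) [1,3,2] \<longleftrightarrow>
    contains3 xs [1,3,2] \<or> contains3 ys [1,3,2] \<or> (\<exists>a\<in>set xs. \<exists>b\<in>set ys. a < b)"
    (is "contains3 ?w _ \<longleftrightarrow> _")
proof
  assume "contains3 ?w [1,3,2]"
  then obtain i j k where ijk: "i < j" "j < k" "k < length ?w" and vals: "?w!i < ?w!k" "?w!k < ?w!j"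
    unfolding contains3_132_iff by blast
  let ?l = "length xs"
  have right: "?w ! x = ys ! (x - Suc ?l)" if "?l < x" for x
    using that by (simp add: nth_append nth_Cons')
  consider "k < ?l" | "?l < i" | "i < ?l" "?l < k" | "i = ?l \<or> k = ?l" by linarith
  then show "contains3 xs [1,3,2] \<or> contains3 ys [1,3,2] \<or> (\<exists>a\<in>set xs. \<exists>b\<in>set ys. a < b)"
  proof cases
    case 1
    then have "contains3 xs [1,3,2]"
      using ijk vals unfolding contains3_132_iff by (intro exI[of _ i] exI[of _ j] exI[of _ k]) (simp add: nth_append)
    then show ?thesis ..
  next
    case 2
    then have "contains3 ys [1,3,2]"
      using ijk vals unfolding contains3_132_iff
      by (intro exI[of _ "i - Suc ?l"] exI[of _ "j - Suc ?l"] exI[of _ "k - Suc ?l"]) (auto simp: right)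
    then show ?thesis by blast
  next
    case 3
    then have "xs ! i \<in> set xs" "ys ! (k - Suc ?l) \<in> set ys" "xs ! i < ys ! (k - Suc ?l)"
      using ijk vals by (auto simp: nth_append)
    then show ?thesis by blast
  next
    case 4
    have "\<forall>x\<in>set ?w. x \<le> m" using xs ys by auto
    moreover have "?w ! j \<in> set ?w" using ijk(2,3) by (intro nth_mem) linarith
    ultimately have "?w ! j \<le> m" by blast
    then show ?thesis using 4 vals by (auto simp: nth_append)
  qed
next
  assume "contains3 xs [1,3,2] \<or> contains3 ys [1,3,2] \<or> (\<exists>a\<in>set xs. \<exists>b\<in>set ys. a < b)"
  then show "contains3 ?w [1,3,2]"
  proof (elim disjE bexE)
    fix a b assume "a \<in> set xs" "b \<in> set ys" "a < b"
    then obtain i k where "i < length xs" "xs ! i = a" "k < length ys" "ys ! k = b"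
      by (metis in_set_conv_nth)
    then show ?thesis unfolding contains3_132_iff using ys \<open>a < b\<close>
      by (intro exI[of _ i] exI[of _ "length xs"] exI[of _ "Suc (length xs + k)"]) (auto simp: nth_append)
  next
    assume "contains3 ys [1,3,2]"
    then show ?thesis using contains3_appendI2[of ys _ "xs @ [m]"] by simp
  qed (rule contains3_appendI1)
qed

lemma contains3_231_append_max:
  assumes "\<forall>x\<in>set xs. x < m" and "\<forall>y\<in>set ys. y < m"
  shows "contains3 (xs @ m # ys) [2,3,1] \<longleftrightarrow>
    contains3 xs [2,3,1] \<or> contains3 ys [2,3,1] \<or> (\<exists>a\<in>set xs. \<exists>b\<in>set ys. b < a)"
proof -
  have rev_132: "contains3 v [2,3,1] \<longleftrightarrow> contains3 (rev v) [1,3,2]" for v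
    using contains3_rev[of "[1,3,2]" v] by simp
  show ?thesis
    unfolding rev_132 using contains3_132_append_max[of "rev ys" m "rev xs"] assms by auto
qed

section \<open>Ascent sequences\<close>

fun ascents :: "nat list \<Rightarrow> bool list" where
  "ascents (x # y # zs) = (x < y) # ascents (y # zs)"
| "ascents _ = []"

lemma nth_ascents: "Suc i < length w \<Longrightarrow> ascents w ! i \<longleftrightarrow> w ! i < w ! Suc i"
proof (induction w arbitrary: i rule: ascents.induct)
  case (1 x y zs)
  then show ?case by (cases i) auto
qed auto

lemma ascents_map_mono:
  "\<forall>x\<in>set w. \<forall>y\<in>set w. h x < h y \<longleftrightarrow> x < y \<Longrightarrow> ascents (map h w) = ascents w"
  by (induction w rule: ascents.induct) auto

lemma ascents_map_antitone:
  "distinct w \<Longrightarrow> \<forall>x\<in>set w. \<forall>y\<in>set w. h x < h y \<longleftrightarrow> y < x \<Longrightarrow> ascents (map h w) = map Not (ascents w)"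
  by (induction w rule: ascents.induct) (auto simp: less_not_sym linorder_neq_iff)

lemma ascents_append_Cons: "ascents (xs @ y # ys) = ascents (xs @ [y]) @ ascents (y # ys)"
proof (induction xs)
  case (Cons x xs)
  then show ?case by (cases xs) auto
qed simp

lemma ascents_append_max:
  assumes "\<forall>x\<in>set xs. x < m" and "\<forall>y\<in>set ys. y < m"
  shows "ascents (xs @ m # ys) =
    (if xs = [] then [] else ascents xs @ [True]) @ (if ys = [] then [] else False # ascents ys)"
proof -
  have "ascents (xs @ [m]) = (if xs = [] then [] else ascents xs @ [True])"
    using assms(1) by (induction xs rule: ascents.induct) auto
  moreover have "ascents (m # ys) = (if ys = [] then [] else False # ascents ys)"
    using assms(2) by (cases ys) auto
  ultimately show ?thesis by (simp only: ascents_append_Cons[of xs m ys])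
qed

lemma ascents_append_max_cong:
  assumes "\<forall>x\<in>set xs \<union> set ys \<union> set xs' \<union> set ys'. x < m"
    and "length xs = length xs'" "length ys = length ys'"
    and "ascents xs = ascents xs'" "ascents ys = ascents ys'"
  shows "ascents (xs @ m # ys) = ascents (xs' @ m # ys')"
  using assms ascents_append_max[of xs m ys] ascents_append_max[of xs' m ys'] by auto

section \<open>Pattern-avoiding permutations\<close>

definition is_perm :: "nat \<Rightarrow> nat list \<Rightarrow> bool" where
  "is_perm n w \<longleftrightarrow> distinct w \<and> set w = {1..n}"

definition avoiders :: "nat \<Rightarrow> nat list \<Rightarrow> nat list set" where
  "avoiders n \<sigma> = {w. is_perm n w \<and> avoids w \<sigma>}"

lemma length_if_is_perm: "is_perm n w \<Longrightarrow> length w = n"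
  unfolding is_perm_def by (metis card_atLeastAtMost diff_Suc_1 distinct_card)

lemma finite_avoiders: "finite (avoiders n \<sigma>)"
proof (rule finite_subset)
  show "avoiders n \<sigma> \<subseteq> {w. set w \<subseteq> {1..n} \<and> length w = n}"
    unfolding avoiders_def using length_if_is_perm by (auto simp: is_perm_def)
qed (rule finite_lists_length_eq[OF finite_atLeastAtMost])

lemma bij_betw_rev_avoiders:
  assumes "length \<sigma> = 3"
  shows "bij_betw rev (avoiders n \<sigma>) (avoiders n (rev \<sigma>))"
proof -
  have "rev w \<in> avoiders n (rev \<sigma>) \<longleftrightarrow> w \<in> avoiders n \<sigma>" for w
    using contains3_rev[of "rev \<sigma>" w] assms by (simp add: avoiders_def avoids_def is_perm_def)
  then have "rev ` avoiders n \<sigma> \<subseteq> avoiders n (rev \<sigma>)" "rev ` avoiders n (rev \<sigma>) \<subseteq> avoiders n \<sigma>"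
    by (force, metis image_subsetI rev_rev_ident)
  then show ?thesis by (intro bij_betw_byWitness[where f' = rev]) auto
qed

definition complement :: "nat \<Rightarrow> nat list \<Rightarrow> nat list" where
  "complement n w = map (\<lambda>x. Suc n - x) w"

lemma complement_complement: "set w \<subseteq> {..Suc n} \<Longrightarrow> complement n (complement n w) = w"
  unfolding complement_def by (induction w) auto

lemma contains3_complement:
  assumes "set w \<subseteq> {1..n}" and "length \<sigma> = 3" and "set \<sigma> \<subseteq> {1..3}"
  shows "contains3 (complement n w) \<sigma> \<longleftrightarrow> contains3 w (complement 3 \<sigma>)"
proof (rule contains3_cong_antitone)
  show "\<forall>i<length w. \<forall>j<length w. complement n w ! i < complement n w ! j \<longleftrightarrow> w ! j < w ! i"
  proof (intro allI impI)
    fix i j assume ij: "i < length w" "j < length w"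
    then have "w ! i \<in> set w" "w ! j \<in> set w" by simp_all
    then have "w ! i \<le> n" "w ! j \<le> n" using assms(1) by auto
    then show "complement n w ! i < complement n w ! j \<longleftrightarrow> w ! j < w ! i"
      using ij by (simp add: complement_def, arith)
  qed
  show "\<forall>a<3. \<forall>b<3. complement 3 \<sigma> ! a < complement 3 \<sigma> ! b \<longleftrightarrow> \<sigma> ! b < \<sigma> ! a"
  proof (intro allI impI)
    fix a b :: nat assume ab: "a < 3" "b < 3"
    then have "\<sigma> ! a \<in> set \<sigma>" "\<sigma> ! b \<in> set \<sigma>" using assms(2) by simp_all
    then have "\<sigma> ! a \<le> 3" "\<sigma> ! b \<le> 3" using assms(3) by auto
    then show "complement 3 \<sigma> ! a < complement 3 \<sigma> ! b \<longleftrightarrow> \<sigma> ! b < \<sigma> ! a"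
      using ab assms(2) by (simp add: complement_def, arith)
  qed
qed (simp add: complement_def)

lemma is_perm_complement:
  assumes "is_perm n w"
  shows "is_perm n (complement n w)"
proof -
  have "inj_on (\<lambda>x. Suc n - x) {1..n}" by (auto intro!: inj_onI)
  moreover have "(\<lambda>x. Suc n - x) ` {1..n} = {1..n}"
  proof (intro equalityI subsetI)
    fix y assume "y \<in> {1..n}"
    then show "y \<in> (\<lambda>x. Suc n - x) ` {1..n}" by (intro image_eqI[of _ _ "Suc n - y"]) auto
  qed auto
  ultimately show ?thesis using assms unfolding is_perm_def complement_def by (simp add: distinct_map)
qed

lemma bij_betw_complement_avoiders:
  assumes "length \<sigma> = 3" and "set \<sigma> \<subseteq> {1..3}"
  shows "bij_betw (complement n) (avoiders n \<sigma>) (avoiders n (complement 3 \<sigma>))"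
proof (rule bij_betw_byWitness[where f' = "complement n"])
  have involutive: "complement n (complement n w) = w" if "is_perm n w" for w
    using that by (intro complement_complement) (auto simp: is_perm_def)
  have contains: "contains3 (complement n w) \<sigma> \<longleftrightarrow> contains3 w (complement 3 \<sigma>)" if "is_perm n w" for w
    using that assms by (intro contains3_complement) (auto simp: is_perm_def)
  show "\<forall>w\<in>avoiders n \<sigma>. complement n (complement n w) = w"
    "\<forall>w\<in>avoiders n (complement 3 \<sigma>). complement n (complement n w) = w"
    using involutive by (auto simp: avoiders_def)
  show "complement n ` avoiders n \<sigma> \<subseteq> avoiders n (complement 3 \<sigma>)"
    using contains[OF is_perm_complement] involutive is_perm_complement
    by (auto simp: avoiders_def avoids_def)
  show "complement n ` avoiders n (complement 3 \<sigma>) \<subseteq> avoiders n \<sigma>"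
    using contains is_perm_complement by (auto simp: avoiders_def avoids_def)
qed

lemma ascents_complement: "is_perm n w \<Longrightarrow> ascents (complement n w) = map Not (ascents w)"
  unfolding complement_def is_perm_def by (rule ascents_map_antitone) auto

lemma lower_set_eq_atLeastAtMost:
  assumes "finite B" and "0 \<notin> B" and "\<forall>b\<in>B. {1..b} \<subseteq> B"
  shows "B = {1..card B}"
proof -
  have "B \<subseteq> {1..card B}"
  proof
    fix b assume "b \<in> B"
    then have "card {1..b} \<le> card B" using assms by (intro card_mono) auto
    then show "b \<in> {1..card B}" using \<open>b \<in> B\<close> assms(2) by (cases b) auto
  qed
  then show ?thesis by (intro card_subset_eq) auto
qed

lemma is_perm_shift_down:
  assumes "distinct \<alpha>" and "set \<alpha> = {t<..t + k}"
  shows "is_perm k (map (\<lambda>x. x - t) \<alpha>)"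
proof -
  have "inj_on (\<lambda>x. x - t) {t<..t + k}" by (auto intro!: inj_onI)
  moreover have "(\<lambda>x. x - t) ` {t<..t + k} = {1..k}"
  proof (intro equalityI subsetI)
    fix y assume "y \<in> {1..k}"
    then show "y \<in> (\<lambda>x. x - t) ` {t<..t + k}" by (intro image_eqI[of _ _ "y + t"]) auto
  qed auto
  ultimately show ?thesis using assms unfolding is_perm_def by (simp add: distinct_map)
qed

lemma is_perm_append_max:
  assumes "is_perm n (\<alpha> @ n # \<beta>)"
  shows "distinct \<alpha>" "distinct \<beta>" "set \<alpha> \<inter> set \<beta> = {}" "set \<alpha> \<union> set \<beta> = {1..<n}"
    "n = length \<alpha> + length \<beta> + 1"
proof -
  have dist: "distinct (\<alpha> @ n # \<beta>)" and set: "set (\<alpha> @ n # \<beta>) = {1..n}"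
    using assms by (simp_all add: is_perm_def)
  then show "distinct \<alpha>" "distinct \<beta>" "set \<alpha> \<inter> set \<beta> = {}" by auto
  have notin: "n \<notin> set \<alpha>" "n \<notin> set \<beta>" using dist by auto
  have "set \<alpha> \<union> set \<beta> = set (\<alpha> @ n # \<beta>) - {n}" using notin by auto
  also have "\<dots> = {1..n} - {n}" by (simp only: set)
  also have "\<dots> = {1..<n}" by auto
  finally show "set \<alpha> \<union> set \<beta> = {1..<n}" .
  show "n = length \<alpha> + length \<beta> + 1" using length_if_is_perm[OF assms] by simp
qed

lemma is_perm_append_max_above:
  assumes "is_perm n (\<alpha> @ n # \<beta>)" and above: "\<forall>a\<in>set \<alpha>. \<forall>b\<in>set \<beta>. b < a"
  shows "set \<beta> = {1..length \<beta>}" and "set \<alpha> = {length \<beta><..length \<beta> + length \<alpha>}"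
proof -
  note parts = is_perm_append_max[OF assms(1)]
  have "set \<beta> = {1..card (set \<beta>)}"
  proof (rule lower_set_eq_atLeastAtMost)
    have sub: "set \<beta> \<subseteq> {1..<n}" using parts(4) by blast
    then show "0 \<notin> set \<beta>" by auto
    show "\<forall>b\<in>set \<beta>. {1..b} \<subseteq> set \<beta>"
    proof (intro ballI subsetI)
      fix b x assume "b \<in> set \<beta>" "x \<in> {1..b}"
      moreover from \<open>b \<in> set \<beta>\<close> sub have "b < n" by auto
      ultimately have "x \<in> {1..<n}" by auto
      then have "x \<in> set \<alpha> \<union> set \<beta>" using parts(4) by simp
      moreover have "x \<notin> set \<alpha>" using above \<open>b \<in> set \<beta>\<close> \<open>x \<in> {1..b}\<close> by fastforce
      ultimately show "x \<in> set \<beta>" by blast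
    qed
  qed simp
  then show set_\<beta>: "set \<beta> = {1..length \<beta>}" using parts(2) by (simp add: distinct_card)
  have "set \<alpha> = (set \<alpha> \<union> set \<beta>) - set \<beta>" using parts(3) by blast
  also have "\<dots> = {1..<n} - {1..length \<beta>}" using parts(4) set_\<beta> by simp
  also have "\<dots> = {length \<beta><..length \<beta> + length \<alpha>}" using parts(5) by auto
  finally show "set \<alpha> = {length \<beta><..length \<beta> + length \<alpha>}" .
qed

lemma avoider_132_decomp:
  assumes "w \<in> avoiders n [1,3,2]" and "n \<noteq> 0"
  obtains \<alpha> \<beta> where "w = \<alpha> @ n # \<beta>" "set \<alpha> = {length \<beta><..length \<beta> + length \<alpha>}"
    "n = length \<alpha> + length \<beta> + 1"
    "map (\<lambda>x. x - length \<beta>) \<alpha> \<in> avoiders (length \<alpha>) [1,3,2]" "\<beta> \<in> avoiders (length \<beta>) [1,3,2]"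
proof -
  have perm: "is_perm n w" and avoid: "\<not> contains3 w [1,3,2]"
    using assms(1) by (simp_all add: avoiders_def avoids_def)
  then have "n \<in> set w" using assms(2) by (simp add: is_perm_def)
  then obtain \<alpha> \<beta> where w: "w = \<alpha> @ n # \<beta>" by (metis split_list)
  note parts = is_perm_append_max[OF perm[unfolded w]]
  have "\<forall>x\<in>set \<alpha>. x < n" "\<forall>x\<in>set \<beta>. x < n" using parts(4) by auto
  then have \<alpha>: "\<not> contains3 \<alpha> [1,3,2]" and \<beta>: "\<not> contains3 \<beta> [1,3,2]"
    and "\<forall>a\<in>set \<alpha>. \<forall>b\<in>set \<beta>. \<not> a < b"
    using avoid contains3_132_append_max unfolding w by auto
  then have "\<forall>a\<in>set \<alpha>. \<forall>b\<in>set \<beta>. b < a"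
    using parts(3) by (metis disjoint_iff linorder_neqE_nat)
  note blocks = is_perm_append_max_above[OF perm[unfolded w] this]
  have "is_perm (length \<alpha>) (map (\<lambda>x. x - length \<beta>) \<alpha>)"
    using parts(1) blocks(2) by (rule is_perm_shift_down)
  moreover have "contains3 (map (\<lambda>x. x - length \<beta>) \<alpha>) [1,3,2] \<longleftrightarrow> contains3 \<alpha> [1,3,2]"
    using blocks(2) by (intro contains3_map_mono) auto
  moreover have "is_perm (length \<beta>) \<beta>" using parts(2) blocks(1) by (simp add: is_perm_def)
  ultimately show ?thesis
    using that[OF w blocks(2) parts(5)] \<alpha> \<beta> by (simp add: avoiders_def avoids_def)
qed

lemma avoider_231_join:
  assumes "L \<in> avoiders k [2,3,1]" and "R \<in> avoiders t [2,3,1]"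
  shows "L @ Suc (k + t) # map (\<lambda>x. x + k) R \<in> avoiders (Suc (k + t)) [2,3,1]"
proof -
  let ?n = "Suc (k + t)" and ?R = "map (\<lambda>x. x + k) R"
  have L: "distinct L" "set L = {1..k}" "\<not> contains3 L [2,3,1]"
    using assms(1) by (simp_all add: avoiders_def avoids_def is_perm_def)
  have R: "distinct R" "set R = {1..t}" "\<not> contains3 R [2,3,1]"
    using assms(2) by (simp_all add: avoiders_def avoids_def is_perm_def)
  have set_R: "set ?R = {k<..k + t}"
  proof (intro equalityI subsetI)
    fix y assume "y \<in> {k<..k + t}"
    then show "y \<in> set ?R" using R(2) by (auto intro!: image_eqI[of _ _ "y - k"])
  qed (use R(2) in auto)
  have "is_perm ?n (L @ ?n # ?R)"
    unfolding is_perm_def using L(1,2) R(1) set_R by (auto simp: distinct_map)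
  moreover have "contains3 ?R [2,3,1] \<longleftrightarrow> contains3 R [2,3,1]" by (rule contains3_map_mono) simp
  then have "\<not> contains3 (L @ ?n # ?R) [2,3,1]"
    using L R set_R contains3_231_append_max[of L ?n ?R] by fastforce
  ultimately show ?thesis by (simp add: avoiders_def avoids_def)
qed

lemma avoiders_0: "avoiders 0 \<sigma> = {[]}"
  by (auto simp: avoiders_def avoids_def is_perm_def contains3_def)

section \<open>An ascent-preserving bijection from 132- to 231-avoiders\<close>

function restack :: "nat list \<Rightarrow> nat list" where
  "restack w = (if w = [] then [] else
     (let m = Max (set w); \<alpha> = takeWhile (\<lambda>x. x \<noteq> m) w; \<beta> = tl (dropWhile (\<lambda>x. x \<noteq> m) w)
      in restack (map (\<lambda>x. x - length \<beta>) \<alpha>) @ m # map (\<lambda>x. x + length \<alpha>) (restack \<beta>)))"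
  by pat_completeness auto
termination
proof (relation "measure length", goal_cases)
  case (2 w m)
  have "length (takeWhile (\<lambda>x. x \<noteq> m) w) < length w" if "m \<in> set w"
    using that by (induction w) auto
  then show ?case using 2 by simp
next
  case (3 w m)
  have "length (dropWhile (\<lambda>x. x \<noteq> m) w) \<le> length w" by (rule length_dropWhile_le)
  then show ?case using 3 by (cases w) auto
qed simp

declare restack.simps [simp del]

lemma restack_Nil [simp]: "restack [] = []"
  by (simp add: restack.simps)

lemma restack_append_max:
  assumes "m \<notin> set \<alpha>" and "\<forall>x\<in>set \<alpha> \<union> set \<beta>. x \<le> m"
  shows "restack (\<alpha> @ m # \<beta>) =
    restack (map (\<lambda>x. x - length \<beta>) \<alpha>) @ m # map (\<lambda>x. x + length \<alpha>) (restack \<beta>)"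
proof -
  have "Max (set (\<alpha> @ m # \<beta>)) = m" using assms(2) by (intro Max_eqI) auto
  moreover have "\<forall>x\<in>set \<alpha>. x \<noteq> m" using assms(1) by auto
  then have "takeWhile (\<lambda>x. x \<noteq> m) (\<alpha> @ m # \<beta>) = \<alpha>" "tl (dropWhile (\<lambda>x. x \<noteq> m) (\<alpha> @ m # \<beta>)) = \<beta>"
    by (simp_all add: takeWhile_append2 dropWhile_append2)
  ultimately show ?thesis by (subst restack.simps) (simp add: Let_def del: length_tl)
qed

lemma restack_perm_append_max:
  assumes "is_perm n (\<alpha> @ n # \<beta>)"
  shows "restack (\<alpha> @ n # \<beta>) =
    restack (map (\<lambda>x. x - length \<beta>) \<alpha>) @ n # map (\<lambda>x. x + length \<alpha>) (restack \<beta>)"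
proof (rule restack_append_max)
  show "n \<notin> set \<alpha>" using assms by (simp add: is_perm_def)
  show "\<forall>x\<in>set \<alpha> \<union> set \<beta>. x \<le> n" using is_perm_append_max(4)[OF assms] by auto
qed

lemma restack_avoider_132:
  assumes "w \<in> avoiders n [1,3,2]"
  shows "restack w \<in> avoiders n [2,3,1] \<and> ascents (restack w) = ascents w"
  using assms
proof (induction n arbitrary: w rule: less_induct)
  case (less n)
  show ?case
  proof (cases "n = 0")
    case True
    then show ?thesis using less.prems by (simp add: avoiders_0)
  next
    case False
    obtain \<alpha> \<beta> where w: "w = \<alpha> @ n # \<beta>" and set_\<alpha>: "set \<alpha> = {length \<beta><..length \<beta> + length \<alpha>}"
      and n: "n = length \<alpha> + length \<beta> + 1"
      and \<alpha>: "map (\<lambda>x. x - length \<beta>) \<alpha> \<in> avoiders (length \<alpha>) [1,3,2]"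
      and \<beta>: "\<beta> \<in> avoiders (length \<beta>) [1,3,2]"
      using avoider_132_decomp[OF less.prems False] by blast
    let ?L = "restack (map (\<lambda>x. x - length \<beta>) \<alpha>)" and ?R = "restack \<beta>"
    have "ascents (map (\<lambda>x. x - length \<beta>) \<alpha>) = ascents \<alpha>"
      using set_\<alpha> by (intro ascents_map_mono) auto
    then have L: "?L \<in> avoiders (length \<alpha>) [2,3,1]" "ascents ?L = ascents \<alpha>"
      using less.IH[OF _ \<alpha>] n by auto
    have R: "?R \<in> avoiders (length \<beta>) [2,3,1]" "ascents ?R = ascents \<beta>"
      using less.IH[OF _ \<beta>] n by auto
    have restack_w: "restack w = ?L @ n # map (\<lambda>x. x + length \<alpha>) ?R"
      using less.prems unfolding w by (intro restack_perm_append_max) (simp add: avoiders_def)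
    have "restack w \<in> avoiders n [2,3,1]"
      unfolding restack_w n using avoider_231_join[OF L(1) R(1)] by simp
    moreover have "ascents (?L @ n # map (\<lambda>x. x + length \<alpha>) ?R) = ascents (\<alpha> @ n # \<beta>)"
    proof (rule ascents_append_max_cong)
      show "\<forall>x\<in>set ?L \<union> set (map (\<lambda>x. x + length \<alpha>) ?R) \<union> set \<alpha> \<union> set \<beta>. x < n"
        using L(1) R(1) \<beta> set_\<alpha> n by (auto simp: avoiders_def is_perm_def)
      show "length ?L = length \<alpha>" "length (map (\<lambda>x. x + length \<alpha>) ?R) = length \<beta>"
        using L(1) R(1) length_if_is_perm by (auto simp: avoiders_def)
      show "ascents (map (\<lambda>x. x + length \<alpha>) ?R) = ascents \<beta>"
        using R(2) ascents_map_mono[of ?R "\<lambda>x. x + length \<alpha>"] by simp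
    qed (rule L(2))
    then have "ascents (restack w) = ascents w" using restack_w w by simp
    ultimately show ?thesis ..
  qed
qed

lemma append_max_shift_inject:
  assumes "is_perm k L" and "is_perm t R" and "is_perm k' L'" and "k + t = k' + t'"
    and "L @ Suc (k + t) # map (\<lambda>x. x + k) R = L' @ Suc (k' + t') # map (\<lambda>x. x + k') R'"
  shows "L = L' \<and> k = k' \<and> R = R'"
proof -
  have "Suc (k + t) \<notin> set L" "Suc (k + t) \<notin> set (map (\<lambda>x. x + k) R)"
    using assms(1,2) by (auto simp: is_perm_def)
  then have "L = L'" and R: "map (\<lambda>x. x + k) R = map (\<lambda>x. x + k') R'"
    using assms(4,5) by (simp_all add: append_Cons_eq_iff)
  moreover from this(1) have "k = k'" using assms(1,3) length_if_is_perm by metis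
  ultimately show ?thesis by simp
qed

lemma restack_injective_132:
  assumes "w \<in> avoiders n [1,3,2]" and "w' \<in> avoiders n [1,3,2]" and "restack w = restack w'"
  shows "w = w'"
  using assms
proof (induction n arbitrary: w w' rule: less_induct)
  case (less n)
  show ?case
  proof (cases "n = 0")
    case True
    then show ?thesis using less.prems by (simp add: avoiders_0)
  next
    case False
    obtain \<alpha> \<beta> where w: "w = \<alpha> @ n # \<beta>" and set_\<alpha>: "set \<alpha> = {length \<beta><..length \<beta> + length \<alpha>}"
      and n: "n = length \<alpha> + length \<beta> + 1"
      and \<alpha>: "map (\<lambda>x. x - length \<beta>) \<alpha> \<in> avoiders (length \<alpha>) [1,3,2]"
      and \<beta>: "\<beta> \<in> avoiders (length \<beta>) [1,3,2]"
      using avoider_132_decomp[OF less.prems(1) False] by blast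
    obtain \<alpha>' \<beta>' where w': "w' = \<alpha>' @ n # \<beta>'" and set_\<alpha>': "set \<alpha>' = {length \<beta>'<..length \<beta>' + length \<alpha>'}"
      and n': "n = length \<alpha>' + length \<beta>' + 1"
      and \<alpha>': "map (\<lambda>x. x - length \<beta>') \<alpha>' \<in> avoiders (length \<alpha>') [1,3,2]"
      and \<beta>': "\<beta>' \<in> avoiders (length \<beta>') [1,3,2]"
      using avoider_132_decomp[OF less.prems(2) False] by blast
    let ?L = "restack (map (\<lambda>x. x - length \<beta>) \<alpha>)" and ?L' = "restack (map (\<lambda>x. x - length \<beta>') \<alpha>')"
    have "?L @ n # map (\<lambda>x. x + length \<alpha>) (restack \<beta>) = ?L' @ n # map (\<lambda>x. x + length \<alpha>') (restack \<beta>')"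
      using less.prems restack_perm_append_max unfolding w w' by (simp add: avoiders_def)
    then have "?L = ?L' \<and> length \<alpha> = length \<alpha>' \<and> restack \<beta> = restack \<beta>'"
      using restack_avoider_132[OF \<alpha>] restack_avoider_132[OF \<beta>] restack_avoider_132[OF \<alpha>'] n n'
      by (intro append_max_shift_inject[where k = "length \<alpha>" and t = "length \<beta>" and k' = "length \<alpha>'"
            and t' = "length \<beta>'"])
        (simp_all add: avoiders_def)
    then have same: "?L = ?L'" "restack \<beta> = restack \<beta>'" "length \<alpha>' = length \<alpha>" "length \<beta>' = length \<beta>"
      using n n' by auto
    have "map (\<lambda>x. x - length \<beta>) \<alpha> = map (\<lambda>x. x - length \<beta>) \<alpha>'"
      using less.IH[of "length \<alpha>"] \<alpha> \<alpha>' same n by simp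
    moreover have "inj_on (\<lambda>x. x - length \<beta>) (set \<alpha> \<union> set \<alpha>')"
      using set_\<alpha> set_\<alpha>' same by (auto intro!: inj_onI)
    ultimately have "\<alpha> = \<alpha>'" by (simp add: inj_on_map_eq_map)
    moreover have "\<beta> = \<beta>'" using less.IH[of "length \<beta>"] \<beta> \<beta>' same n by simp
    ultimately show ?thesis using w w' by simp
  qed
qed

lemma bij_betw_restack: "bij_betw restack (avoiders n [1,3,2]) (avoiders n [2,3,1])"
proof -
  have inj: "inj_on restack (avoiders n [1,3,2])"
    using restack_injective_132 by (intro inj_onI)
  moreover have "restack ` avoiders n [1,3,2] \<subseteq> avoiders n [2,3,1]"
    using restack_avoider_132 by blast
  moreover have "card (avoiders n [1,3,2]) = card (avoiders n [2,3,1])"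
    using bij_betw_same_card[OF bij_betw_rev_avoiders[of "[1,3,2]" n]] by simp
  ultimately have "restack ` avoiders n [1,3,2] = avoiders n [2,3,1]"
    using finite_avoiders by (intro card_subset_eq) (auto simp: card_image)
  with inj show ?thesis by (simp add: bij_betw_def)
qed

section \<open>Parking functions with a prescribed permutation\<close>

lemma concat_filter_blocks:
  fixes f :: "nat \<Rightarrow> nat"
  assumes "sorted_wrt (<) xs" and "sorted_wrt (<) ss"
  defines "ys \<equiv> concat (map (\<lambda>s. filter (\<lambda>j. f j = s) xs) ss)"
  shows "distinct ys" "set ys = {j\<in>set xs. f j \<in> set ss}" "sorted (map (\<lambda>j. (f j, j)) ys)"
proof -
  have "distinct ys \<and> set ys = {j\<in>set xs. f j \<in> set ss} \<and> sorted (map (\<lambda>j. (f j, j)) ys)"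
    using assms(2) unfolding ys_def
  proof (induction ss)
    case (Cons s ss)
    let ?C = "concat (map (\<lambda>s. filter (\<lambda>j. f j = s) xs) ss)" and ?F = "filter (\<lambda>j. f j = s) xs"
    have IH: "distinct ?C" "set ?C = {j\<in>set xs. f j \<in> set ss}" "sorted (map (\<lambda>j. (f j, j)) ?C)"
      using Cons by simp_all
    have later: "\<forall>x\<in>set ss. s < x" using Cons.prems by simp
    have "sorted_wrt (<) ?F" using assms(1) by (simp add: sorted_wrt_filter)
    then have "sorted_wrt (\<lambda>x y. (f x, x) \<le> (f y, y)) ?F"
      by (rule sorted_wrt_mono_rel[rotated]) (auto simp: less_eq_prod_def)
    then have "sorted (map (\<lambda>j. (f j, j)) ?F)" by (simp add: sorted_map)
    moreover have "\<forall>x\<in>set ?F. \<forall>y\<in>set ?C. (f x, x) \<le> (f y, y)"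
      using IH(2) later by (auto simp: less_eq_prod_def)
    ultimately have "sorted (map (\<lambda>j. (f j, j)) (?F @ ?C))"
      using IH(3) by (auto simp: sorted_append)
    moreover have "distinct (?F @ ?C)"
      using IH(1,2) later assms(1) by (auto simp: strict_sorted_iff)
    moreover have "set (?F @ ?C) = {j\<in>set xs. f j \<in> set (s # ss)}" using IH(2) by auto
    ultimately show ?case by simp
  qed simp
  then show "distinct ys" "set ys = {j\<in>set xs. f j \<in> set ss}" "sorted (map (\<lambda>j. (f j, j)) ys)"
    by simp_all
qed

lemma pf_perm_eq_iff:
  assumes "is_parking_function n p"
  shows "pf_perm p = \<pi> \<longleftrightarrow> is_perm n \<pi> \<and> sorted (map (\<lambda>j. (p ! (j - 1), j)) \<pi>)"
proof -
  have len: "length p = n" and vals: "set p \<subseteq> {1..n}"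
    using assms by (simp_all add: is_parking_function_def)
  have upt: "sorted_wrt (<) [1..<n + 1]" by (simp add: strict_sorted_iff del: upt_Suc)
  have range: "p ! (j - 1) \<in> {1..n}" if "j \<in> {1..n}" for j
  proof -
    have "p ! (j - 1) \<in> set p" using that len by (intro nth_mem) auto
    then show ?thesis using vals by blast
  qed
  have "set [1..<n + 1] = {1..n}" by auto
  then have "{j \<in> set [1..<n + 1]. p ! (j - 1) \<in> set [1..<n + 1]} = {1..n}"
    using range by (simp only:) blast
  then have self: "is_perm n (pf_perm p) \<and> sorted (map (\<lambda>j. (p ! (j - 1), j)) (pf_perm p))"
    using concat_filter_blocks[OF upt upt, of "\<lambda>j. p ! (j - 1)"]
    unfolding pf_perm_def is_perm_def len by simp
  have unique: "\<pi> = \<pi>'" if "is_perm n \<pi>" "is_perm n \<pi>'"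
    "sorted (map (\<lambda>j. (p ! (j - 1), j)) \<pi>)" "sorted (map (\<lambda>j. (p ! (j - 1), j)) \<pi>')" for \<pi> \<pi>'
  proof -
    have "inj (\<lambda>j. (p ! (j - 1), j))" by (auto intro: injI)
    moreover have "map (\<lambda>j. (p ! (j - 1), j)) \<pi> = map (\<lambda>j. (p ! (j - 1), j)) \<pi>'"
      using that by (intro sorted_distinct_set_unique) (auto simp: is_perm_def distinct_map inj_on_def)
    ultimately show ?thesis by simp
  qed
  show ?thesis using self unique by blast
qed

definition read_along :: "nat list \<Rightarrow> nat list \<Rightarrow> nat list" where
  "read_along \<pi> p = map (\<lambda>j. p ! (j - 1)) \<pi>"

text \<open>\<open>relabel \<pi> \<pi>' p\<close> is the tuple \<open>q\<close> with \<open>q\<^sub>j = p\<^sub>\<pi>\<^sub>i\<close> whenever \<open>j = \<pi>'\<^sub>i\<close>.\<close>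

definition relabel :: "nat list \<Rightarrow> nat list \<Rightarrow> nat list \<Rightarrow> nat list" where
  "relabel \<pi> \<pi>' p = map (\<lambda>j. the (map_of (zip \<pi>' (read_along \<pi> p)) j)) [1..<length p + 1]"

lemma length_relabel [simp]: "length (relabel \<pi> \<pi>' p) = length p"
  by (simp add: relabel_def del: upt_Suc)

lemma read_along_relabel:
  assumes "is_perm n \<pi>" and "is_perm n \<pi>'" and "length p = n"
  shows "read_along \<pi>' (relabel \<pi> \<pi>' p) = read_along \<pi> p"
proof (rule nth_equalityI)
  have len: "length \<pi> = n" "length \<pi>' = n" using assms(1,2) by (simp_all add: length_if_is_perm)
  then show "length (read_along \<pi>' (relabel \<pi> \<pi>' p)) = length (read_along \<pi> p)"
    by (simp add: read_along_def)
  fix i assume "i < length (read_along \<pi>' (relabel \<pi> \<pi>' p))"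
  then have i: "i < n" using len by (simp add: read_along_def)
  then have "\<pi>' ! i \<in> {1..n}" using assms(2) len nth_mem[of i \<pi>'] by (auto simp: is_perm_def)
  then have "\<pi>' ! i - 1 < length [1..<n + 1]" "[1..<n + 1] ! (\<pi>' ! i - 1) = \<pi>' ! i"
    by (auto simp del: upt_Suc)
  then have "relabel \<pi> \<pi>' p ! (\<pi>' ! i - 1) = the (map_of (zip \<pi>' (read_along \<pi> p)) (\<pi>' ! i))"
    unfolding relabel_def assms(3) by (simp only: nth_map)
  moreover have "map_of (zip \<pi>' (read_along \<pi> p)) (\<pi>' ! i) = Some (read_along \<pi> p ! i)"
    using assms(2) len i by (intro map_of_zip_nth) (simp_all add: is_perm_def read_along_def)
  ultimately show "read_along \<pi>' (relabel \<pi> \<pi>' p) ! i = read_along \<pi> p ! i"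
    using i len by (simp add: read_along_def)
qed

lemma read_along_inject:
  assumes "is_perm n \<pi>" and "length p = n" and "length q = n" and "read_along \<pi> p = read_along \<pi> q"
  shows "p = q"
proof (rule nth_equalityI)
  show "length p = length q" using assms(2,3) by simp
  fix j assume "j < length p"
  then have "Suc j \<in> set \<pi>" using assms(1,2) by (simp add: is_perm_def)
  then obtain i where "i < length \<pi>" "\<pi> ! i = Suc j" by (metis in_set_conv_nth)
  then show "p ! j = q ! j" using arg_cong[OF assms(4), of "\<lambda>v. v ! i"] by (simp add: read_along_def)
qed

lemma mset_read_along:
  assumes "is_perm n \<pi>" and "length p = n"
  shows "mset (read_along \<pi> p) = mset p"
proof -
  have "set [1..<n + 1] = {1..n}" by auto
  then have "mset \<pi> = mset [1..<n + 1]"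
    using assms(1) set_eq_iff_mset_eq_distinct[of \<pi> "[1..<n + 1]"] by (simp add: is_perm_def del: upt_Suc)
  then have "mset (read_along \<pi> p) = mset (map (\<lambda>j. p ! (j - 1)) [1..<n + 1])"
    unfolding read_along_def by (metis mset_map)
  also have "map (\<lambda>j. p ! (j - 1)) [1..<n + 1] = p"
    using assms(2) by (intro nth_equalityI) (auto simp del: upt_Suc)
  finally show ?thesis .
qed

lemma is_parking_function_mset_eq:
  assumes "is_parking_function n p" and "mset q = mset p"
  shows "is_parking_function n q"
proof -
  have "length q = length p" "set q = set p" "sort q = sort p"
    using assms(2) by (metis size_mset, metis set_mset_mset, metis sorted_list_of_multiset_mset)
  then show ?thesis using assms(1) by (simp add: is_parking_function_def)
qed

lemma sorted_zip_ascents_eq: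
  assumes "sorted (zip v \<pi>)" and "distinct \<pi>" and "length v = length \<pi>" and "length \<pi>' = length \<pi>"
    and "ascents \<pi>' = ascents \<pi>"
  shows "sorted (zip v \<pi>')"
  unfolding sorted_iff_nth_Suc
proof (intro allI impI)
  fix i assume "Suc i < length (zip v \<pi>')"
  then have i: "Suc i < length \<pi>" using assms(3,4) by simp
  then have le: "(v ! i, \<pi> ! i) \<le> (v ! Suc i, \<pi> ! Suc i)"
    using assms(1,3) unfolding sorted_iff_nth_Suc by fastforce
  have "\<pi> ! i \<noteq> \<pi> ! Suc i" using assms(2) i by (simp add: nth_eq_iff_index_eq)
  moreover have "\<pi>' ! i < \<pi>' ! Suc i \<longleftrightarrow> \<pi> ! i < \<pi> ! Suc i"
    using assms(4,5) i nth_ascents by metis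
  ultimately show "zip v \<pi>' ! i \<le> zip v \<pi>' ! Suc i"
    using le i assms(3,4) by (auto simp: less_eq_prod_def)
qed

lemma zip_read_along: "zip (read_along \<pi> p) \<pi> = map (\<lambda>j. (p ! (j - 1), j)) \<pi>"
  by (induction \<pi>) (simp_all add: read_along_def)

definition pf_with_perm :: "nat \<Rightarrow> nat list \<Rightarrow> nat list set" where
  "pf_with_perm n \<pi> = {p. is_parking_function n p \<and> pf_perm p = \<pi>}"

lemma relabel_in_pf_with_perm:
  assumes "p \<in> pf_with_perm n \<pi>" and "is_perm n \<pi>'" and "ascents \<pi>' = ascents \<pi>"
  shows "relabel \<pi> \<pi>' p \<in> pf_with_perm n \<pi>'" and "relabel \<pi>' \<pi> (relabel \<pi> \<pi>' p) = p"
proof -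
  let ?q = "relabel \<pi> \<pi>' p"
  have pf: "is_parking_function n p" and "pf_perm p = \<pi>" using assms(1) by (simp_all add: pf_with_perm_def)
  then have \<pi>: "is_perm n \<pi>" and sorted: "sorted (zip (read_along \<pi> p) \<pi>)"
    using pf_perm_eq_iff[OF pf] by (simp_all add: zip_read_along)
  have len: "length p = n" "length \<pi> = n" "length \<pi>' = n"
    using pf \<pi> assms(2) by (simp_all add: is_parking_function_def length_if_is_perm)
  have along: "read_along \<pi>' ?q = read_along \<pi> p" using read_along_relabel[OF \<pi> assms(2) len(1)] .
  have "mset ?q = mset (read_along \<pi>' ?q)" by (rule mset_read_along[OF assms(2), symmetric]) (simp add: len(1))
  also have "\<dots> = mset p" unfolding along by (rule mset_read_along[OF \<pi> len(1)])
  finally have "mset ?q = mset p" .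
  then have pf_q: "is_parking_function n ?q" by (rule is_parking_function_mset_eq[OF pf])
  have "sorted (zip (read_along \<pi> p) \<pi>')"
  proof (rule sorted_zip_ascents_eq[OF sorted])
    show "distinct \<pi>" using \<pi> by (simp add: is_perm_def)
    show "length (read_along \<pi> p) = length \<pi>" "length \<pi>' = length \<pi>" using len by (simp_all add: read_along_def)
  qed (rule assms(3))
  then have "sorted (zip (read_along \<pi>' ?q) \<pi>')" by (simp only: along)
  then have "pf_perm ?q = \<pi>'" using pf_perm_eq_iff[OF pf_q] assms(2) by (simp add: zip_read_along)
  with pf_q show "?q \<in> pf_with_perm n \<pi>'" by (simp add: pf_with_perm_def)
  have "read_along \<pi> (relabel \<pi>' \<pi> ?q) = read_along \<pi> p"
    using read_along_relabel[OF assms(2) \<pi>, of ?q] along len(1) by simp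
  then show "relabel \<pi>' \<pi> ?q = p" using read_along_inject[OF \<pi>] len(1) by simp
qed

lemma card_pf_with_perm_eq:
  assumes "is_perm n \<pi>" and "is_perm n \<pi>'" and "ascents \<pi> = ascents \<pi>'"
  shows "card (pf_with_perm n \<pi>) = card (pf_with_perm n \<pi>')"
proof (rule bij_betw_same_card[of "relabel \<pi> \<pi>'"], rule bij_betw_byWitness[where f' = "relabel \<pi>' \<pi>"])
  note forward = relabel_in_pf_with_perm[OF _ assms(2) assms(3)[symmetric]]
  note backward = relabel_in_pf_with_perm[OF _ assms(1) assms(3)]
  show "\<forall>p\<in>pf_with_perm n \<pi>. relabel \<pi>' \<pi> (relabel \<pi> \<pi>' p) = p" using forward(2) by blast
  show "\<forall>p\<in>pf_with_perm n \<pi>'. relabel \<pi> \<pi>' (relabel \<pi>' \<pi> p) = p" using backward(2) by blast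
  show "relabel \<pi> \<pi>' ` pf_with_perm n \<pi> \<subseteq> pf_with_perm n \<pi>'" using forward(1) by blast
  show "relabel \<pi>' \<pi> ` pf_with_perm n \<pi>' \<subseteq> pf_with_perm n \<pi>" using backward(1) by blast
qed

lemma finite_pf_with_perm: "finite (pf_with_perm n \<pi>)"
proof (rule finite_subset)
  show "pf_with_perm n \<pi> \<subseteq> {p. set p \<subseteq> {1..n} \<and> length p = n}"
    by (auto simp: pf_with_perm_def is_parking_function_def)
qed (rule finite_lists_length_eq[OF finite_atLeastAtMost])

lemma pf_count_eq_sum: "pf_count n \<sigma> = (\<Sum>\<pi>\<in>avoiders n \<sigma>. card (pf_with_perm n \<pi>))"
proof -
  have "{p. is_parking_function n p \<and> avoids (pf_perm p) \<sigma>} = (\<Union>\<pi>\<in>avoiders n \<sigma>. pf_with_perm n \<pi>)"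
    using pf_perm_eq_iff by (auto simp: avoiders_def pf_with_perm_def)
  moreover have "\<forall>\<pi>\<in>avoiders n \<sigma>. \<forall>\<pi>'\<in>avoiders n \<sigma>. \<pi> \<noteq> \<pi>' \<longrightarrow> pf_with_perm n \<pi> \<inter> pf_with_perm n \<pi>' = {}"
    by (auto simp: pf_with_perm_def)
  ultimately show ?thesis unfolding pf_count_def
    by (simp add: card_UN_disjoint finite_avoiders finite_pf_with_perm)
qed

lemma pf_count_eq_if_bij:
  assumes "bij_betw f (avoiders n \<sigma>) (avoiders n \<tau>)"
    and "\<And>\<pi>. \<pi> \<in> avoiders n \<sigma> \<Longrightarrow> ascents (f \<pi>) = ascents \<pi>"
  shows "pf_count n \<sigma> = pf_count n \<tau>"
proof -
  have "(\<Sum>\<pi>\<in>avoiders n \<sigma>. card (pf_with_perm n \<pi>)) = (\<Sum>\<pi>\<in>avoiders n \<sigma>. card (pf_with_perm n (f \<pi>)))"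
  proof (rule sum.cong)
    fix \<pi> assume "\<pi> \<in> avoiders n \<sigma>"
    moreover have "f \<pi> \<in> avoiders n \<tau>" using assms(1) calculation by (auto dest: bij_betwE)
    ultimately show "card (pf_with_perm n \<pi>) = card (pf_with_perm n (f \<pi>))"
      using assms(2) by (intro card_pf_with_perm_eq) (auto simp: avoiders_def)
  qed simp
  also have "\<dots> = (\<Sum>\<pi>\<in>avoiders n \<tau>. card (pf_with_perm n \<pi>))"
    using assms(1) by (rule sum.reindex_bij_betw)
  finally show ?thesis by (simp add: pf_count_eq_sum)
qed

lemma avoiders_213_312_ascents_bij:
  obtains f where "bij_betw f (avoiders n [2,1,3]) (avoiders n [3,1,2])"
    and "\<And>\<pi>. \<pi> \<in> avoiders n [2,1,3] \<Longrightarrow> ascents (f \<pi>) = ascents \<pi>"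
proof
  let ?c = "complement n" and ?unstack = "the_inv_into (avoiders n [1,3,2]) restack"
  have c213: "bij_betw ?c (avoiders n [2,1,3]) (avoiders n [2,3,1])"
    using bij_betw_complement_avoiders[of "[2,1,3]" n] by (simp add: complement_def)
  have c132: "bij_betw ?c (avoiders n [1,3,2]) (avoiders n [3,1,2])"
    using bij_betw_complement_avoiders[of "[1,3,2]" n] by (simp add: complement_def)
  have unstack: "bij_betw ?unstack (avoiders n [2,3,1]) (avoiders n [1,3,2])"
    by (rule bij_betw_the_inv_into[OF bij_betw_restack])
  show "bij_betw (?c \<circ> ?unstack \<circ> ?c) (avoiders n [2,1,3]) (avoiders n [3,1,2])"
    by (rule bij_betw_trans[OF c213 bij_betw_trans[OF unstack c132]])
  fix \<pi> assume \<pi>: "\<pi> \<in> avoiders n [2,1,3]"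
  define u where "u = ?unstack (?c \<pi>)"
  have "?c \<pi> \<in> avoiders n [2,3,1]" using c213 \<pi> by (auto dest: bij_betwE)
  then have u: "u \<in> avoiders n [1,3,2]" and "restack u = ?c \<pi>"
    unfolding u_def using unstack bij_betw_restack by (auto dest: bij_betwE intro: f_the_inv_into_f_bij_betw)
  then have "ascents u = map Not (ascents \<pi>)"
    using restack_avoider_132[OF u] ascents_complement \<pi> by (auto simp: avoiders_def)
  then show "ascents ((?c \<circ> ?unstack \<circ> ?c) \<pi>) = ascents \<pi>"
    using ascents_complement u unfolding u_def by (auto simp: avoiders_def comp_def map_idI)
qed

theorem proposition4p1:
  fixes n :: nat
  assumes "n \<ge> 1"
  shows "pf_count n [1,3,2] = pf_count n [2,3,1] \<and> pf_count n [2,1,3] = pf_count n [3,1,2]"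
proof
  show "pf_count n [1,3,2] = pf_count n [2,3,1]"
    by (rule pf_count_eq_if_bij[OF bij_betw_restack]) (simp add: restack_avoider_132)
  obtain f where "bij_betw f (avoiders n [2,1,3]) (avoiders n [3,1,2])"
    and "\<And>\<pi>. \<pi> \<in> avoiders n [2,1,3] \<Longrightarrow> ascents (f \<pi>) = ascents \<pi>"
    using avoiders_213_312_ascents_bij[of n] by blast
  then show "pf_count n [2,1,3] = pf_count n [3,1,2]" by (rule pf_count_eq_if_bij)
qed

end
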